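(* Let $\oplus$ be a combinator. Then $\oplus$ satisfies ($\oplus$PAR): for every pair $\langle\preceq_1,\preceq_2\rangle$ in its domain and all $x,y \in W$, if $x \prec_{1\oplus 2} y$ then for each $i \in \{1,2\}$ there exists $z$ with $x \sim_{1\oplus 2} z$ and $z \prec_i y$; if and only if it satisfies ($\oplus$SB): for every pair in its domain and every $S \subseteq W$, if $x \prec_{1\oplus 2} y$ for every $x \in S^c$ and $y \in S$, then $\min(\preceq_1, S) \cup \min(\preceq_2, S) \subseteq \min(\preceq_{1\oplus 2}, S)$.
   Context: $W$ is a finite nonempty set (of possible worlds); $S^c$ is the complement of $S$ in $W$. A tpo is a total preorder on $W$; $\prec$, $\sim$ its strict and symmetric parts. For $S \subseteq W$, $\min(\preceq, S) = \{x \in S : x \preceq y\ \forall y \in S\}$. A combinator $\oplus$ maps pairs of tpos $\langle\preceq_1,\preceq_2\rangle$ in its domain to a tpo $\preceq_{1\oplus 2}$, with strict part $\prec_{1\oplus 2}$ and symmetric part $\sim_{1\oplus 2}$. *)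

theory Defs
  imports Main
begin

text \<open>Possible worlds W are the elements of a finite type 'w (nonempty automatically).
  A relation on W is a binary predicate; preceq x y reads x \<preceq> y.\<close>

type_synonym 'w rel2 = "'w \<Rightarrow> 'w \<Rightarrow> bool"

definition tpo :: "'w rel2 \<Rightarrow> bool" where
  "tpo r \<longleftrightarrow> (\<forall>x y. r x y \<or> r y x) \<and> (\<forall>x y z. r x y \<longrightarrow> r y z \<longrightarrow> r x z)"

definition strict :: "'w rel2 \<Rightarrow> 'w rel2" where
  "strict r x y \<longleftrightarrow> r x y \<and> \<not> r y x"

definition symp_part :: "'w rel2 \<Rightarrow> 'w rel2" where
  "symp_part r x y \<longleftrightarrow> r x y \<and> r y x"

definition min_set :: "'w rel2 \<Rightarrow> 'w set \<Rightarrow> 'w set" where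
  "min_set r S = {x \<in> S. \<forall>y\<in>S. r x y}"

definition combinator :: "('w rel2 \<times> 'w rel2) set \<Rightarrow> ('w rel2 \<Rightarrow> 'w rel2 \<Rightarrow> 'w rel2) \<Rightarrow> bool" where
  "combinator D c \<longleftrightarrow> (\<forall>(r1, r2)\<in>D. tpo r1 \<and> tpo r2 \<and> tpo (c r1 r2))"

definition PAR :: "('w rel2 \<times> 'w rel2) set \<Rightarrow> ('w rel2 \<Rightarrow> 'w rel2 \<Rightarrow> 'w rel2) \<Rightarrow> bool" where
  "PAR D c \<longleftrightarrow> (\<forall>(r1, r2)\<in>D. \<forall>x y. strict (c r1 r2) x y \<longrightarrow>
      (\<forall>ri\<in>{r1, r2}. \<exists>z. symp_part (c r1 r2) x z \<and> strict ri z y))"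

definition SB :: "('w rel2 \<times> 'w rel2) set \<Rightarrow> ('w rel2 \<Rightarrow> 'w rel2 \<Rightarrow> 'w rel2) \<Rightarrow> bool" where
  "SB D c \<longleftrightarrow> (\<forall>(r1, r2)\<in>D. \<forall>S. (\<forall>x\<in>-S. \<forall>y\<in>S. strict (c r1 r2) x y) \<longrightarrow>
      min_set r1 S \<union> min_set r2 S \<subseteq> min_set (c r1 r2) S)"

end

theory Submission
  imports Defs
begin

text \<open>Fix the combined order \<open>r\<close> and one input order \<open>ri\<close>; both conditions split into one
  statement per input. If \<open>S\<close> lies strictly above its complement in \<open>r\<close> and \<open>w\<close> is \<open>ri\<close>-minimal
  in \<open>S\<close> but some \<open>y \<in> S\<close> is \<open>r\<close>-below \<open>w\<close>, a PAR witness \<open>z \<sim> y\<close> with \<open>z \<prec>\<^sub>i w\<close> must lie in \<open>S\<close>,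
  contradicting minimality. Conversely, given \<open>x \<prec> y\<close>, apply SB to the upper set of \<open>x\<close>: an
  \<open>ri\<close>-minimal element of it is \<open>r\<close>-minimal, hence \<open>\<sim> x\<close>, and it is strictly \<open>ri\<close>-below \<open>y\<close>,
  since otherwise \<open>y\<close> itself would be \<open>r\<close>-minimal there.\<close>

definition final_segment :: "'w rel2 \<Rightarrow> 'w set \<Rightarrow> bool" where
  "final_segment r S \<longleftrightarrow> (\<forall>x\<in>-S. \<forall>y\<in>S. strict r x y)"

lemma tpo_total: "tpo r \<Longrightarrow> r x y \<or> r y x"
  unfolding tpo_def by blast

lemma tpo_trans: "tpo r \<Longrightarrow> r x y \<Longrightarrow> r y z \<Longrightarrow> r x z"
  unfolding tpo_def by blast

lemma min_set_nonempty:
  assumes "tpo r" "finite S" "S \<noteq> {}"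
  shows "min_set r S \<noteq> {}"
  using assms(2,3)
proof (induction S rule: finite_ne_induct)
  case (singleton x)
  then show ?case using tpo_total[OF assms(1), of x x] unfolding min_set_def by auto
next
  case (insert x F)
  then obtain m where m: "m \<in> min_set r F" by blast
  show ?case
  proof (cases "r x m")
    case True
    then show ?thesis
      using m tpo_total[OF assms(1), of x x] tpo_trans[OF assms(1), of x m]
      unfolding min_set_def by auto
  next
    case False
    then have "r m x" using tpo_total[OF assms(1)] by blast
    then show ?thesis using m unfolding min_set_def by blast
  qed
qed

lemma final_segment_upper_set:
  assumes "tpo r"
  shows "final_segment r {w. r x w}"
  unfolding final_segment_def strict_def
  using tpo_total[OF assms] tpo_trans[OF assms] by blast

lemma min_set_subset_if_witnesses:
  assumes "tpo r"
    and witness: "\<And>x y. strict r x y \<Longrightarrow> \<exists>z. symp_part r x z \<and> strict ri z y"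
    and "final_segment r S"
  shows "min_set ri S \<subseteq> min_set r S"
proof
  fix w assume w: "w \<in> min_set ri S"
  show "w \<in> min_set r S"
  proof (rule ccontr)
    assume "w \<notin> min_set r S"
    then obtain y where y: "y \<in> S" "\<not> r w y" using w unfolding min_set_def by blast
    then have "strict r y w" using tpo_total[OF assms(1), of w y] unfolding strict_def by blast
    then obtain z where z: "symp_part r y z" "strict ri z w" using witness by blast
    have "z \<in> S"
    proof (rule ccontr)
      assume "z \<notin> S"
      then have "strict r z y" using \<open>final_segment r S\<close> y(1) unfolding final_segment_def by blast
      then show False using z(1) unfolding strict_def symp_part_def by blast
    qed
    then show False using z(2) w unfolding min_set_def strict_def by blast
  qed
qed

lemma witness_if_min_set_subset:
  fixes r ri :: "('w::finite) rel2"
  assumes "tpo r" "tpo ri"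
    and preserved: "\<And>S. final_segment r S \<Longrightarrow> min_set ri S \<subseteq> min_set r S"
    and xy: "strict r x y"
  shows "\<exists>z. symp_part r x z \<and> strict ri z y"
proof -
  define S where "S = {w. r x w}"
  have sub: "min_set ri S \<subseteq> min_set r S"
    using preserved final_segment_upper_set[OF assms(1)] unfolding S_def by blast
  have xS: "x \<in> S" and yS: "y \<in> S"
    using tpo_total[OF assms(1), of x x] xy unfolding S_def strict_def by auto
  then obtain m where m: "m \<in> min_set ri S"
    using min_set_nonempty[OF assms(2), of S] by auto
  have "symp_part r x m"
    using m sub xS unfolding min_set_def S_def symp_part_def by blast
  moreover have "\<not> ri y m"
  proof
    assume "ri y m"
    then have "y \<in> min_set r S"
      using m yS sub tpo_trans[OF assms(2), of y m] unfolding min_set_def by blast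
    then show False using xS xy unfolding min_set_def strict_def by blast
  qed
  then have "strict ri m y" using m yS unfolding min_set_def strict_def by blast
  ultimately show ?thesis by blast
qed

lemma witnesses_iff_min_set_subset:
  fixes r ri :: "('w::finite) rel2"
  assumes "tpo r" "tpo ri"
  shows "(\<forall>x y. strict r x y \<longrightarrow> (\<exists>z. symp_part r x z \<and> strict ri z y)) \<longleftrightarrow>
    (\<forall>S. final_segment r S \<longrightarrow> min_set ri S \<subseteq> min_set r S)"
  using min_set_subset_if_witnesses[OF assms(1)] witness_if_min_set_subset[OF assms]
  by blast

theorem proposition9:
  fixes D :: "(('w::finite) rel2 \<times> 'w rel2) set"
    and c :: "'w rel2 \<Rightarrow> 'w rel2 \<Rightarrow> 'w rel2"
  assumes "combinator D c"
  shows "PAR D c \<longleftrightarrow> SB D c"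
proof -
  have "PAR D c \<longleftrightarrow> (\<forall>(r1, r2)\<in>D. \<forall>ri\<in>{r1, r2}.
      \<forall>x y. strict (c r1 r2) x y \<longrightarrow> (\<exists>z. symp_part (c r1 r2) x z \<and> strict ri z y))"
    unfolding PAR_def by blast
  also have "\<dots> \<longleftrightarrow> (\<forall>(r1, r2)\<in>D. \<forall>ri\<in>{r1, r2}.
      \<forall>S. final_segment (c r1 r2) S \<longrightarrow> min_set ri S \<subseteq> min_set (c r1 r2) S)"
  proof (rule ball_cong[OF refl], clarsimp simp only: prod.case, rule ball_cong[OF refl])
    fix r1 r2 ri assume "(r1, r2) \<in> D" "ri \<in> {r1, r2}"
    then have "tpo (c r1 r2)" "tpo ri" using assms unfolding combinator_def by auto
    then show "(\<forall>x y. strict (c r1 r2) x y \<longrightarrow> (\<exists>z. symp_part (c r1 r2) x z \<and> strict ri z y)) \<longleftrightarrow>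
        (\<forall>S. final_segment (c r1 r2) S \<longrightarrow> min_set ri S \<subseteq> min_set (c r1 r2) S)"
      by (rule witnesses_iff_min_set_subset)
  qed
  also have "\<dots> \<longleftrightarrow> SB D c"
    unfolding SB_def final_segment_def by blast
  finally show ?thesis .
qed

end
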